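(* Let $\theta=(\theta_1,\theta_2,\theta_3)\in\mathbb R^3\setminus\{0\}$ and let $m$ be a point on the boundary of the cube $[0,1]^3$ such that the billiard word $u=f_\theta(m)$ is well defined. Then $\delta_a(u)$ is a Sturmian word if and only if $\theta_2,\theta_3$ are linearly independent over $\mathbb Q$.
   Context: For $\theta$ and $m$ such that the line $m+\mathbb R\theta$ contains no point with more than one integer coordinate, the billiard word $f_\theta(m)\in\{a,b,c\}^{\mathbb N}$ records, in order, the successive intersections of the half line $m+\mathbb R_+\theta$ with the planes $X=n$ (letter $a$), $Y=n$ (letter $b$), $Z=n$ (letter $c$), $n\in\mathbb Z$ (this is the coding of the billiard trajectory in the unit cube, opposite faces carrying the same letter). $\delta_a$ denotes the map erasing all occurrences of the letter $a$ in a word. *)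

theory Defs
  imports Complex_Main "HOL-Library.Infinite_Set"
begin

text \<open>Letters: a codes the planes X = n, b the planes Y = n, c the planes Z = n.
  Points and directions of R^3 are triples; the coordinate read by a letter:\<close>

datatype letter = A | B | C

fun coord :: "letter \<Rightarrow> real \<times> real \<times> real \<Rightarrow> real" where
  "coord A (x, y, z) = x"
| "coord B (x, y, z) = y"
| "coord C (x, y, z) = z"

definition billiard_well_defined :: "real \<times> real \<times> real \<Rightarrow> real \<times> real \<times> real \<Rightarrow> bool" where
  "billiard_well_defined \<theta> m \<longleftrightarrow>
     (\<forall>t::real. \<forall>i j. i \<noteq> j \<and> coord i m + t * coord i \<theta> \<in> \<int> \<and> coord j m + t * coord j \<theta> \<in> \<int> \<longrightarrow> False)"

definition crossing_times :: "real \<times> real \<times> real \<Rightarrow> real \<times> real \<times> real \<Rightarrow> real set" where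
  "crossing_times \<theta> m = {t. t > 0 \<and> (\<exists>i. coord i m + t * coord i \<theta> \<in> \<int>)}"

definition billiard_word :: "real \<times> real \<times> real \<Rightarrow> real \<times> real \<times> real \<Rightarrow> nat \<Rightarrow> letter" where
  "billiard_word \<theta> m = (\<lambda>n. THE i. \<exists>s::nat \<Rightarrow> real. strict_mono s \<and> range s = crossing_times \<theta> m
       \<and> coord i m + s n * coord i \<theta> \<in> \<int>)"

definition factors :: "(nat \<Rightarrow> 'a) \<Rightarrow> nat \<Rightarrow> 'a list set" where
  "factors w n = {map (\<lambda>i. w (k + i)) [0..<n] | k. True}"

definition sturmian :: "(nat \<Rightarrow> 'a) \<Rightarrow> bool" where
  "sturmian w \<longleftrightarrow> (\<forall>n. finite (factors w n) \<and> card (factors w n) = n + 1)"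

text \<open>delta_a: erase all occurrences of a. The result is infinite iff u has infinitely many
  letters different from a; then it is the word below. A finite word is never Sturmian.\<close>
definition erase_A :: "(nat \<Rightarrow> letter) \<Rightarrow> nat \<Rightarrow> letter" where
  "erase_A u = (\<lambda>n. u (enumerate {k. u k \<noteq> A} n))"

definition erase_A_sturmian :: "(nat \<Rightarrow> letter) \<Rightarrow> bool" where
  "erase_A_sturmian u \<longleftrightarrow> infinite {k. u k \<noteq> A} \<and> sturmian (erase_A u)"

definition Q_lin_indep2 :: "real \<Rightarrow> real \<Rightarrow> bool" where
  "Q_lin_indep2 x y \<longleftrightarrow> (\<forall>p q :: rat. of_rat p * x + of_rat q * y = 0 \<longrightarrow> p = 0 \<and> q = 0)"

definition cube_boundary :: "(real \<times> real \<times> real) set" where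
  "cube_boundary = {m. (\<forall>i. 0 \<le> coord i m \<and> coord i m \<le> 1) \<and> (\<exists>i. coord i m = 0 \<or> coord i m = 1)}"

end

theory Submission
  imports Defs "HOL-Analysis.Kronecker_Approximation_Theorem"
begin

text \<open>Erasing \<open>a\<close> from the billiard word leaves the cutting sequence of the plane line
  \<open>t \<mapsto> (m\<^sub>2 + t\<theta>\<^sub>2, m\<^sub>3 + t\<theta>\<^sub>3)\<close> with respect to the lines \<open>Y = n\<close> (letter \<open>b\<close>) and \<open>Z = n\<close>
  (letter \<open>c\<close>). If \<open>\<theta>\<^sub>2 \<theta>\<^sub>3 \<noteq> 0\<close>, the number \<open>\<lfloor>Y\<rfloor> + \<lfloor>Z\<rfloor>\<close> of crossings grows by one at each
  crossing while \<open>Z - g(Y + Z)\<close> stays constant for \<open>g = |\<theta>\<^sub>3| / (|\<theta>\<^sub>2| + |\<theta>\<^sub>3|)\<close>, which makes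
  the cutting sequence a mechanical word of slope \<open>g\<close>. Such a word is Sturmian iff \<open>g\<close> is
  irrational, i.e. iff \<open>\<theta>\<^sub>2, \<theta>\<^sub>3\<close> are linearly independent over \<open>\<rat>\<close>: a rational slope makes it
  periodic, while for irrational \<open>g\<close> the factors of length \<open>n\<close> correspond to the \<open>n + 1\<close>
  intervals into which the points \<open>{-jg}\<close>, \<open>j \<le> n\<close>, cut \<open>[0, 1)\<close>, all of them visited by
  Kronecker's theorem. If \<open>\<theta>\<^sub>2\<close> or \<open>\<theta>\<^sub>3\<close> vanishes, the corresponding letter never occurs, so the
  erased word is constant or finite.\<close>

lemma periodic_not_sturmian:
  assumes "q > 0" and periodic: "\<And>n. w (n + q) = w n"
  shows "\<not> sturmian w"
proof
  let ?factor = "\<lambda>k. map (\<lambda>i. w (k + i)) [0..<q]"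
  have shift: "w (k + j * q) = w k" for k j
  proof (induction j)
    case (Suc j)
    have "k + Suc j * q = (k + j * q) + q" by simp
    then show ?case by (simp only: periodic Suc.IH)
  qed simp
  have "factors w q \<subseteq> ?factor ` {..<q}"
  proof
    fix f assume "f \<in> factors w q"
    then obtain k where f: "f = ?factor k" unfolding factors_def by auto
    have "w (k + i) = w (k mod q + i)" for i
      using shift[of "k mod q + i" "k div q"] by (simp add: add.commute add.left_commute)
    then have "f = ?factor (k mod q)" using f by simp
    moreover have "k mod q \<in> {..<q}" using \<open>q > 0\<close> by simp
    ultimately show "f \<in> ?factor ` {..<q}" by blast
  qed
  then have "card (factors w q) \<le> card (?factor ` {..<q})" by (rule card_mono[rotated]) simp
  also have "\<dots> \<le> q" using card_image_le[of "{..<q}" ?factor] by simp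
  moreover assume "sturmian w"
  then have "card (factors w q) = q + 1" unfolding sturmian_def by blast
  ultimately show False by linarith
qed

lemma erase_A_sturmian_imp_letters:
  assumes "erase_A_sturmian u"
  shows "B \<in> range u" and "C \<in> range u"
proof -
  have inf: "infinite {k. u k \<noteq> A}" and st: "sturmian (erase_A u)"
    using assms unfolding erase_A_sturmian_def by auto
  have erase_in: "erase_A u n \<in> range u" "erase_A u n \<noteq> A" for n
    using enumerate_in_set[OF inf] unfolding erase_A_def by auto
  have not_const: "\<exists>n. erase_A u n \<noteq> x" for x
  proof (rule ccontr)
    assume "\<nexists>n. erase_A u n \<noteq> x"
    then show False using periodic_not_sturmian[of 1 "erase_A u"] st by simp
  qed
  obtain n where "erase_A u n \<noteq> C" using not_const by blast
  then have "erase_A u n = B" using erase_in(2) by (cases "erase_A u n") simp_all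
  then show "B \<in> range u" using erase_in(1) by metis
  obtain n where "erase_A u n \<noteq> B" using not_const by blast
  then have "erase_A u n = C" using erase_in(2) by (cases "erase_A u n") simp_all
  then show "C \<in> range u" using erase_in(1) by metis
qed

section \<open>Enumerating discrete sets\<close>

lemma strict_mono_on_card_less:
  fixes T :: "'a::linorder set"
  assumes "\<And>x. x \<in> T \<Longrightarrow> finite {t \<in> T. t < x}"
  shows "strict_mono_on T (\<lambda>x. card {t \<in> T. t < x})"
proof (rule strict_mono_onI)
  fix x y assume "x \<in> T" "y \<in> T" "x < y"
  then have "{t \<in> T. t < x} \<subset> {t \<in> T. t < y}" by auto
  then show "card {t \<in> T. t < x} < card {t \<in> T. t < y}"
    using assms[OF \<open>y \<in> T\<close>] by (rule psubset_card_mono[rotated])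
qed

lemma range_less_strict_mono:
  fixes s :: "nat \<Rightarrow> 'a::linorder"
  assumes "strict_mono s"
  shows "{t \<in> range s. t < s n} = s ` {..<n}"
  using strict_mono_less[OF assms] by auto

lemma card_range_less_strict_mono:
  fixes s :: "nat \<Rightarrow> 'a::linorder"
  assumes "strict_mono s"
  shows "card {t \<in> range s. t < s n} = n"
proof -
  have "inj_on s {..<n}" using strict_mono_imp_inj_on[OF assms] by (rule inj_on_subset) (rule subset_UNIV)
  then show ?thesis by (simp add: range_less_strict_mono[OF assms] card_image)
qed

lemma strict_mono_range_eq_imp_eq:
  fixes s s' :: "nat \<Rightarrow> 'a::linorder"
  assumes s: "strict_mono s" and s': "strict_mono s'" and range: "range s = range s'"
  shows "s = s'"
proof
  fix n
  let ?rank = "\<lambda>x. card {t \<in> range s. t < x}"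
  have "finite {t \<in> range s. t < x}" if "x \<in> range s" for x
    using that range_less_strict_mono[OF s] by auto
  then have "inj_on ?rank (range s)"
    by (intro strict_mono_on_imp_inj_on strict_mono_on_card_less)
  moreover have "?rank (s n) = ?rank (s' n)"
    using card_range_less_strict_mono[OF s] card_range_less_strict_mono[OF s'] range by simp
  moreover have "s n \<in> range s" "s' n \<in> range s" using range by auto
  ultimately show "s n = s' n" by (auto dest: inj_onD)
qed

lemma ex_strict_mono_enumeration:
  fixes T :: "'a::linorder set"
  assumes "infinite T" and finite_below: "\<And>x. x \<in> T \<Longrightarrow> finite {t \<in> T. t < x}"
  obtains s :: "nat \<Rightarrow> 'a" where "strict_mono s" "range s = T"
proof -
  define rank where "rank x = card {t \<in> T. t < x}" for x
  have mono: "strict_mono_on T rank" unfolding rank_def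
    using finite_below by (rule strict_mono_on_card_less)
  then have inj: "inj_on rank T" by (rule strict_mono_on_imp_inj_on)
  then have inf: "infinite (rank ` T)" using \<open>infinite T\<close> finite_imageD by blast
  define s where "s = the_inv_into T rank \<circ> enumerate (rank ` T)"
  have s_rank: "s n \<in> T \<and> rank (s n) = enumerate (rank ` T) n" for n
  proof -
    obtain x where "x \<in> T" "enumerate (rank ` T) n = rank x"
      using enumerate_in_set[OF inf, of n] by auto
    then show ?thesis using inj unfolding s_def by (simp add: the_inv_into_f_f)
  qed
  have "strict_mono s"
  proof (rule strict_monoI)
    fix m n :: nat assume "m < n"
    then have "rank (s m) < rank (s n)" using s_rank enumerate_mono[OF _ inf] by simp
    then show "s m < s n"
      using s_rank strict_mono_on_leD[OF mono] by (meson leD le_less_linear)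
  qed
  moreover have "range s = T"
    using inj unfolding s_def image_comp[symmetric] range_enumerate[OF inf]
    by (simp add: the_inv_into_onto)
  ultimately show thesis by (rule that)
qed

section \<open>Mechanical words\<close>

definition mechanical_letter :: "real \<Rightarrow> real \<Rightarrow> letter" where
  "mechanical_letter g x = (if \<lfloor>x + g\<rfloor> = \<lfloor>x\<rfloor> + 1 then C else B)"

text \<open>The lower mechanical word \<open>s\<^sub>g\<^sub>,\<^sub>r(n) = \<lfloor>g(n+1)+r\<rfloor> - \<lfloor>gn+r\<rfloor>\<close>,
  written with \<^const>\<open>B\<close> for 0 and \<^const>\<open>C\<close> for 1.\<close>

definition mechanical_word :: "real \<Rightarrow> real \<Rightarrow> nat \<Rightarrow> letter" where
  "mechanical_word g r n = mechanical_letter g (g * real n + r)"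

definition mechanical_factor :: "real \<Rightarrow> nat \<Rightarrow> real \<Rightarrow> letter list" where
  "mechanical_factor g n x = map (\<lambda>i. mechanical_letter g (x + g * real i)) [0..<n]"

definition mechanical_breakpoints :: "real \<Rightarrow> nat \<Rightarrow> real set" where
  "mechanical_breakpoints g n = (\<lambda>j. frac (- (g * real j))) ` {..n}"

lemma mechanical_letter_add_of_int [simp]:
  "mechanical_letter g (x + of_int k) = mechanical_letter g x"
proof -
  have "x + of_int k + g = (x + g) + of_int k" by simp
  then show ?thesis unfolding mechanical_letter_def by (simp only: floor_add_int[symmetric]) simp
qed

lemma mechanical_word_factor:
  "map (\<lambda>i. mechanical_word g r (k + i)) [0..<n] = mechanical_factor g n (frac (g * real k + r))"
proof -
  have "g * real (k + i) + r = frac (g * real k + r) + g * real i + of_int \<lfloor>g * real k + r\<rfloor>" for i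
    by (simp add: frac_def algebra_simps)
  then show ?thesis unfolding mechanical_word_def mechanical_factor_def by simp
qed

lemma rational_mechanical_word_not_sturmian:
  assumes "g \<in> \<rat>"
  shows "\<not> sturmian (mechanical_word g r)"
proof -
  obtain p q where g: "g = of_int p / of_int q" and "q > 0"
    using assms by (metis Rats_cases' of_rat_rat)
  have "g * real (n + nat q) + r = (g * real n + r) + of_int p" for n
    using \<open>q > 0\<close> by (simp add: g field_simps)
  then have "mechanical_word g r (n + nat q) = mechanical_word g r n" for n
    unfolding mechanical_word_def by (simp only: mechanical_letter_add_of_int)
  then show ?thesis using \<open>q > 0\<close> by (intro periodic_not_sturmian[of "nat q"]) simp_all
qed

lemma mechanical_factor_eq_iff_floors:
  assumes g: "0 < g" "g < 1" and x: "0 \<le> x" "x < 1" and x': "0 \<le> x'" "x' < 1"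
  shows "mechanical_factor g n x = mechanical_factor g n x' \<longleftrightarrow>
    (\<forall>j \<le> n. \<lfloor>x + g * real j\<rfloor> = \<lfloor>x' + g * real j\<rfloor>)"
proof
  assume eq: "mechanical_factor g n x = mechanical_factor g n x'"
  show "\<forall>j \<le> n. \<lfloor>x + g * real j\<rfloor> = \<lfloor>x' + g * real j\<rfloor>"
  proof (intro allI impI)
    fix j assume "j \<le> n"
    then show "\<lfloor>x + g * real j\<rfloor> = \<lfloor>x' + g * real j\<rfloor>"
    proof (induction j)
      case 0
      have "\<lfloor>x\<rfloor> = 0" "\<lfloor>x'\<rfloor> = 0" using x x' by (simp_all add: floor_eq_iff)
      then show ?case by simp
    next
      case (Suc j)
      have step: "y + g * real (Suc j) = (y + g * real j) + g" for y
        by (simp add: algebra_simps)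
      have bounded: "\<lfloor>y\<rfloor> \<le> \<lfloor>y + g\<rfloor> \<and> \<lfloor>y + g\<rfloor> \<le> \<lfloor>y\<rfloor> + 1" for y
        using g by linarith
      have "mechanical_factor g n x ! j = mechanical_factor g n x' ! j" using eq by simp
      then have "mechanical_letter g (x + g * real j) = mechanical_letter g (x' + g * real j)"
        using Suc.prems unfolding mechanical_factor_def by simp
      then show ?case
        using Suc bounded[of "x + g * real j"] bounded[of "x' + g * real j"]
        unfolding step mechanical_letter_def by (auto split: if_splits)
    qed
  qed
next
  assume floors: "\<forall>j \<le> n. \<lfloor>x + g * real j\<rfloor> = \<lfloor>x' + g * real j\<rfloor>"
  have "mechanical_letter g (x + g * real i) = mechanical_letter g (x' + g * real i)" if "i < n" for i
  proof -
    have "y + g * real (Suc i) = (y + g * real i) + g" for y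
      by (simp add: algebra_simps)
    moreover have "\<lfloor>x + g * real (Suc i)\<rfloor> = \<lfloor>x' + g * real (Suc i)\<rfloor>"
      and "\<lfloor>x + g * real i\<rfloor> = \<lfloor>x' + g * real i\<rfloor>"
      using floors[rule_format, of "Suc i"] floors[rule_format, of i] that by simp_all
    ultimately show ?thesis unfolding mechanical_letter_def by (simp add: add.assoc)
  qed
  then show "mechanical_factor g n x = mechanical_factor g n x'"
    unfolding mechanical_factor_def by simp
qed

lemma floor_add_neq_iff:
  fixes x x' c :: real
  assumes "0 \<le> x" "x \<le> x'" "x' < 1"
  shows "\<lfloor>x + c\<rfloor> \<noteq> \<lfloor>x' + c\<rfloor> \<longleftrightarrow> x < frac (- c) \<and> frac (- c) \<le> x'"
proof -
  have fc: "frac (- c) = of_int (- \<lfloor>- c\<rfloor>) - c" by (simp add: frac_def)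
  have "\<lfloor>x + c\<rfloor> \<noteq> \<lfloor>x' + c\<rfloor> \<longleftrightarrow> \<lfloor>x + c\<rfloor> < - \<lfloor>- c\<rfloor> \<and> - \<lfloor>- c\<rfloor> \<le> \<lfloor>x' + c\<rfloor>"
    using assms by linarith
  also have "\<dots> \<longleftrightarrow> x < frac (- c) \<and> frac (- c) \<le> x'"
    unfolding fc floor_less_iff le_floor_iff by linarith
  finally show ?thesis .
qed

lemma mechanical_factor_eq_iff_no_breakpoint:
  assumes "0 < g" "g < 1" and "0 \<le> x" "x \<le> x'" "x' < 1"
  shows "mechanical_factor g n x = mechanical_factor g n x' \<longleftrightarrow>
    \<not> (\<exists>d \<in> mechanical_breakpoints g n. x < d \<and> d \<le> x')"
  using assms floor_add_neq_iff[of x x']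
  by (auto simp: mechanical_factor_eq_iff_floors mechanical_breakpoints_def)

lemma mechanical_breakpoints_bounds:
  assumes "d \<in> mechanical_breakpoints g n"
  shows "0 \<le> d" "d < 1"
  using assms by (auto simp: mechanical_breakpoints_def frac_lt_1)

lemma zero_in_mechanical_breakpoints: "0 \<in> mechanical_breakpoints g n"
  by (force simp: mechanical_breakpoints_def)

lemma finite_mechanical_breakpoints: "finite (mechanical_breakpoints g n)"
  by (simp add: mechanical_breakpoints_def)

lemma card_mechanical_breakpoints:
  assumes "g \<notin> \<rat>"
  shows "card (mechanical_breakpoints g n) = n + 1"
proof -
  have "i = j" if "i \<le> n" "j \<le> n" and eq: "frac (- (g * real i)) = frac (- (g * real j))" for i j
  proof (rule ccontr)
    obtain z where "- (g * real i) = - (g * real j) + of_int z"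
      using eq by (rule frac_eqE)
    moreover assume "i \<noteq> j"
    ultimately have "g = of_int z / (real j - real i)" by (simp add: field_simps)
    then show False using assms by simp
  qed
  then have "inj_on (\<lambda>j. frac (- (g * real j))) {..n}" by (intro inj_onI) simp
  then show ?thesis unfolding mechanical_breakpoints_def by (simp add: card_image)
qed

lemma inj_on_mechanical_factor:
  assumes "0 < g" "g < 1"
  shows "inj_on (mechanical_factor g n) (mechanical_breakpoints g n)"
proof -
  have "mechanical_factor g n d \<noteq> mechanical_factor g n d'"
    if "d \<in> mechanical_breakpoints g n" "d' \<in> mechanical_breakpoints g n" "d < d'" for d d'
  proof -
    have "0 \<le> d" "d' < 1" using that mechanical_breakpoints_bounds by simp_all
    then show ?thesis using that assms by (subst mechanical_factor_eq_iff_no_breakpoint) auto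
  qed
  then show ?thesis by (metis inj_onI linorder_neqE)
qed

lemma frac_orbit_dense:
  fixes g r a b :: real
  assumes "g \<notin> \<rat>" "0 \<le> a" "a < b" "b \<le> 1"
  obtains k :: nat where "a < frac (g * real k + r)" "frac (g * real k + r) < b"
proof -
  define e where "e = (b - a) / 2"
  have "e > 0" using assms by (simp add: e_def)
  then obtain h k :: int where "k > 0" and hk: "\<bar>of_int k * g - of_int h - (a + e - r)\<bar> < e"
    using sequence_of_fractional_parts_is_dense[OF assms(1)] by metis
  define x where "x = g * real (nat k) + r - of_int h"
  have "x - (a + e) = of_int k * g - of_int h - (a + e - r)"
    using \<open>k > 0\<close> by (simp add: x_def algebra_simps)
  then have "\<bar>x - (a + e)\<bar> < e" using hk by simp
  then have "a < x" "x < b" by (auto simp: abs_less_iff e_def field_simps)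
  moreover have "frac (g * real (nat k) + r) = x"
    unfolding frac_unique_iff x_def using \<open>a < x\<close> \<open>x < b\<close> assms by (auto simp: x_def)
  ultimately show thesis by (intro that[of "nat k"]) simp_all
qed

lemma factors_mechanical_word:
  assumes "0 < g" "g < 1" "g \<notin> \<rat>"
  shows "factors (mechanical_word g r) n = mechanical_factor g n ` mechanical_breakpoints g n"
    (is "_ = mechanical_factor g n ` ?D")
proof (intro equalityI subsetI)
  have D: "finite ?D" "0 \<in> ?D" "\<And>d. d \<in> ?D \<Longrightarrow> 0 \<le> d"
    by (simp_all add: finite_mechanical_breakpoints zero_in_mechanical_breakpoints
        mechanical_breakpoints_bounds)
  fix f assume "f \<in> factors (mechanical_word g r) n"
  then obtain k where f: "f = mechanical_factor g n (frac (g * real k + r))"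
    by (auto simp: factors_def mechanical_word_factor)
  define x where "x = frac (g * real k + r)"
  have "0 \<le> x" "x < 1" by (simp_all add: x_def frac_lt_1)
  define d where "d = Max {d \<in> ?D. d \<le> x}"
  have "finite {d \<in> ?D. d \<le> x}" "0 \<in> {d \<in> ?D. d \<le> x}" using D \<open>0 \<le> x\<close> by simp_all
  then have "d \<in> ?D" "d \<le> x" and d_max: "\<And>e. e \<in> ?D \<Longrightarrow> e \<le> x \<Longrightarrow> e \<le> d"
    unfolding d_def using Max_in Max_ge by blast+
  moreover have "\<not> (\<exists>e \<in> ?D. d < e \<and> e \<le> x)" by (auto dest: d_max)
  ultimately have "mechanical_factor g n d = mechanical_factor g n x"
    using mechanical_factor_eq_iff_no_breakpoint[OF assms(1,2) _ _ \<open>x < 1\<close>] D by blast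
  then have "f = mechanical_factor g n d" using f by (simp add: x_def)
  then show "f \<in> mechanical_factor g n ` ?D" using \<open>d \<in> ?D\<close> by (rule image_eqI)
next
  fix f assume "f \<in> mechanical_factor g n ` ?D"
  then obtain d where "d \<in> ?D" and f: "f = mechanical_factor g n d" by auto
  then have "0 \<le> d" "d < 1" by (simp_all add: mechanical_breakpoints_bounds)
  define b where "b = Min (insert 1 {e \<in> ?D. d < e})"
  have fin: "finite (insert 1 {e \<in> ?D. d < e})" by (simp add: finite_mechanical_breakpoints)
  have "b \<in> insert 1 {e \<in> ?D. d < e}" unfolding b_def using fin by (rule Min_in) simp
  then have "d < b" using \<open>d < 1\<close> by auto
  have "b \<le> 1" unfolding b_def using fin by (rule Min_le) simp
  have b_min: "b \<le> e" if "e \<in> ?D" "d < e" for e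
    unfolding b_def using fin that by (intro Min_le) auto
  obtain k where k: "d < frac (g * real k + r)" "frac (g * real k + r) < b"
    by (rule frac_orbit_dense[OF assms(3) \<open>0 \<le> d\<close> \<open>d < b\<close> \<open>b \<le> 1\<close>])
  have "\<not> (\<exists>e \<in> ?D. d < e \<and> e \<le> frac (g * real k + r))"
    using k(2) by (auto dest: b_min)
  then have "mechanical_factor g n d = mechanical_factor g n (frac (g * real k + r))"
    using mechanical_factor_eq_iff_no_breakpoint[OF assms(1,2) \<open>0 \<le> d\<close> _ frac_lt_1] k(1) by simp
  then show "f \<in> factors (mechanical_word g r) n"
    unfolding f factors_def by (auto simp: mechanical_word_factor)
qed

lemma sturmian_mechanical_word_iff:
  assumes "0 < g" "g < 1"
  shows "sturmian (mechanical_word g r) \<longleftrightarrow> g \<notin> \<rat>"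
proof
  assume irrational: "g \<notin> \<rat>"
  have "card (mechanical_factor g n ` mechanical_breakpoints g n) = n + 1" for n
    using card_image[OF inj_on_mechanical_factor[OF assms]] card_mechanical_breakpoints[OF irrational]
    by simp
  then show "sturmian (mechanical_word g r)"
    unfolding sturmian_def factors_mechanical_word[OF assms irrational]
    by (simp add: finite_mechanical_breakpoints)
qed (use rational_mechanical_word_not_sturmian in blast)

section \<open>Cutting sequences of lines\<close>

lemma Ints_line_abs_slope:
  fixes w c :: real
  shows "\<exists>w'. \<forall>t. w + t * c \<in> \<int> \<longleftrightarrow> w' + t * \<bar>c\<bar> \<in> \<int>"
proof (cases "c \<ge> 0")
  case False
  have "w + t * c \<in> \<int> \<longleftrightarrow> - w + t * \<bar>c\<bar> \<in> \<int>" for t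
    using False minus_in_Ints_iff[of "w + t * c"] by simp
  then show ?thesis by blast
qed auto

lemma finite_line_Ints_le:
  fixes w c R :: real
  assumes "c \<noteq> 0"
  shows "finite {t. 0 < t \<and> t \<le> R \<and> w + t * c \<in> \<int>}"
proof -
  define M where "M = \<lceil>\<bar>w\<bar> + \<bar>R * c\<bar>\<rceil>"
  have "{t. 0 < t \<and> t \<le> R \<and> w + t * c \<in> \<int>} \<subseteq> (\<lambda>k. (of_int k - w) / c) ` {-M..M}"
  proof
    fix t assume t: "t \<in> {t. 0 < t \<and> t \<le> R \<and> w + t * c \<in> \<int>}"
    then obtain k where k: "w + t * c = of_int k" by (auto elim: Ints_cases)
    have "\<bar>t * c\<bar> \<le> \<bar>R * c\<bar>" using t by (simp add: abs_mult mult_right_mono)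
    then have "\<bar>of_int k\<bar> \<le> \<bar>w\<bar> + \<bar>R * c\<bar>" using k by linarith
    then have "k \<in> {-M..M}" unfolding M_def by (simp add: abs_le_iff) linarith
    moreover have "t = (of_int k - w) / c" using k assms by (simp add: field_simps)
    ultimately show "t \<in> (\<lambda>k. (of_int k - w) / c) ` {-M..M}" by blast
  qed
  then show ?thesis by (rule finite_subset) simp
qed

lemma infinite_line_Ints:
  fixes w c :: real
  assumes "c \<noteq> 0"
  shows "infinite {t. 0 < t \<and> w + t * c \<in> \<int>}"
proof -
  obtain w' where w': "\<And>t. w + t * c \<in> \<int> \<longleftrightarrow> w' + t * \<bar>c\<bar> \<in> \<int>"
    using Ints_line_abs_slope by blast
  define f where "f n = (of_int (\<lceil>w'\<rceil> + 1 + int n) - w') / \<bar>c\<bar>" for n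
  have "inj f" using assms by (auto intro!: injI simp: f_def)
  moreover have "range f \<subseteq> {t. 0 < t \<and> w + t * c \<in> \<int>}"
  proof -
    have "w' < of_int (\<lceil>w'\<rceil> + 1 + int n)" for n by linarith
    then show ?thesis using assms by (auto simp: w' f_def)
  qed
  ultimately show ?thesis using range_inj_infinite infinite_super by blast
qed

lemma ex_enumeration_line_crossings:
  fixes w c :: "'i \<Rightarrow> real"
  assumes "finite I" "i \<in> I" and "\<And>i. i \<in> I \<Longrightarrow> c i \<noteq> 0"
  obtains s :: "nat \<Rightarrow> real"
  where "strict_mono s" "range s = {t. 0 < t \<and> (\<exists>i \<in> I. w i + t * c i \<in> \<int>)}"
proof (rule ex_strict_mono_enumeration)
  let ?T = "{t. 0 < t \<and> (\<exists>i \<in> I. w i + t * c i \<in> \<int>)}"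
  have "{t. 0 < t \<and> w i + t * c i \<in> \<int>} \<subseteq> ?T" using \<open>i \<in> I\<close> by blast
  then show "infinite ?T" using infinite_line_Ints[OF assms(3)[OF \<open>i \<in> I\<close>]] infinite_super by blast
  fix x
  have "{t \<in> ?T. t < x} \<subseteq> (\<Union>i \<in> I. {t. 0 < t \<and> t \<le> x \<and> w i + t * c i \<in> \<int>})" by auto
  then show "finite {t \<in> ?T. t < x}"
    using finite_line_Ints_le assms by (meson finite_UN_I finite_subset)
qed (rule that)

lemma floor_line_step:
  fixes w c a b :: real
  assumes "c > 0" "a < b" and no_crossing: "\<And>t. a < t \<Longrightarrow> t < b \<Longrightarrow> w + t * c \<notin> \<int>"
  shows "\<lfloor>w + b * c\<rfloor> = \<lfloor>w + a * c\<rfloor> + (if w + b * c \<in> \<int> then 1 else 0)"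
proof -
  define k where "k = \<lfloor>w + a * c\<rfloor> + 1"
  have below: "w + a * c < of_int k" "w + a * c < w + b * c"
    using assms unfolding k_def by simp_all
  have "w + b * c \<le> of_int k"
  proof (rule ccontr)
    define t where "t = (of_int k - w) / c"
    assume "\<not> w + b * c \<le> of_int k"
    then have "a < t" "t < b" "w + t * c \<in> \<int>"
      using below \<open>c > 0\<close> by (simp_all add: t_def field_simps)
    then show False using no_crossing by blast
  qed
  moreover have "w + b * c \<in> \<int> \<longleftrightarrow> w + b * c = of_int k"
  proof
    assume "w + b * c \<in> \<int>"
    then obtain z where z: "w + b * c = of_int z" by (auto elim: Ints_cases)
    then have "\<lfloor>w + a * c\<rfloor> < z" using below by (simp add: floor_less_iff)
    then show "w + b * c = of_int k" using z \<open>w + b * c \<le> of_int k\<close> unfolding k_def by simp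
  qed simp
  ultimately show ?thesis using below unfolding k_def by (auto simp: floor_eq_iff) linarith+
qed

lemma mechanical_letter_crossing:
  fixes Y Z g :: real
  assumes "0 < g" "g < 1" and "Y \<in> \<int> \<or> Z \<in> \<int>" and "\<not> (Y \<in> \<int> \<and> Z \<in> \<int>)"
  shows "mechanical_letter g (g * of_int (\<lfloor>Y\<rfloor> + \<lfloor>Z\<rfloor>) + (Z - g * (Y + Z))) = C \<longleftrightarrow> Z \<in> \<int>"
proof -
  define x where "x = g * of_int (\<lfloor>Y\<rfloor> + \<lfloor>Z\<rfloor>) + (Z - g * (Y + Z))"
  have x: "x = Z - g * (frac Y + frac Z)" by (simp add: x_def frac_def algebra_simps)
  have "mechanical_letter g x = C \<longleftrightarrow> Z \<in> \<int>" (is ?letter)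
  proof (cases "Z \<in> \<int>")
    case True
    then obtain j where Z: "Z = of_int j" by (auto elim: Ints_cases)
    have "0 < frac Y" "frac Y < 1" using assms True by (simp_all add: frac_lt_1 frac_gt_0_iff)
    then have bounds: "0 < g * frac Y" "g * frac Y < g"
      using mult_strict_left_mono[of "frac Y" 1 g] \<open>0 < g\<close> by simp_all
    have x_eq: "x = of_int j - g * frac Y" using x True Z by simp
    have "\<lfloor>x\<rfloor> = j - 1" "\<lfloor>x + g\<rfloor> = j"
      by (intro floor_unique; use x_eq bounds \<open>g < 1\<close> in linarith)+
    then show ?letter using True unfolding mechanical_letter_def by simp
  next
    case False
    then have "Y \<in> \<int>" using assms(3) by blast
    have "0 < frac Z" "frac Z < 1" using False by (simp_all add: frac_lt_1 frac_gt_0_iff)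
    then have bounds: "0 < (1 - g) * frac Z" "(1 - g) * frac Z < 1 - g"
      using mult_strict_left_mono[of "frac Z" 1 "1 - g"] \<open>g < 1\<close> by simp_all
    have x_eq: "x = of_int \<lfloor>Z\<rfloor> + (1 - g) * frac Z"
      using x \<open>Y \<in> \<int>\<close> by (simp add: frac_def algebra_simps)
    have "\<lfloor>x\<rfloor> = \<lfloor>Z\<rfloor>" "\<lfloor>x + g\<rfloor> = \<lfloor>Z\<rfloor>"
      by (intro floor_unique; use x_eq bounds \<open>0 < g\<close> in linarith)+
    then show ?letter using False unfolding mechanical_letter_def by simp
  qed
  then show ?thesis by (simp only: x_def)
qed

lemma crossing_count:
  fixes y0 z0 \<alpha> \<beta> :: real and s :: "nat \<Rightarrow> real"
  assumes "\<alpha> > 0" "\<beta> > 0"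
    and simple: "\<And>t. \<not> (y0 + t * \<alpha> \<in> \<int> \<and> z0 + t * \<beta> \<in> \<int>)"
    and s: "strict_mono s" and range: "range s = {t. 0 < t \<and> (y0 + t * \<alpha> \<in> \<int> \<or> z0 + t * \<beta> \<in> \<int>)}"
  shows "\<lfloor>y0 + s n * \<alpha>\<rfloor> + \<lfloor>z0 + s n * \<beta>\<rfloor> = \<lfloor>y0\<rfloor> + \<lfloor>z0\<rfloor> + int n + 1"
proof -
  let ?hit = "\<lambda>t. y0 + t * \<alpha> \<in> \<int> \<or> z0 + t * \<beta> \<in> \<int>"
  have step: "\<lfloor>y0 + b * \<alpha>\<rfloor> + \<lfloor>z0 + b * \<beta>\<rfloor> = \<lfloor>y0 + a * \<alpha>\<rfloor> + \<lfloor>z0 + a * \<beta>\<rfloor> + 1"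
    if "a < b" "?hit b" "\<And>t. a < t \<Longrightarrow> t < b \<Longrightarrow> \<not> ?hit t" for a b
    using floor_line_step[OF \<open>\<alpha> > 0\<close> \<open>a < b\<close>, of y0] floor_line_step[OF \<open>\<beta> > 0\<close> \<open>a < b\<close>, of z0]
      that simple[of b] by auto
  have hit: "0 < s n" "?hit (s n)" for n
    using range by blast+
  have no_hit: "\<not> ?hit t" if "0 < t" "t < s 0 \<or> (s n < t \<and> t < s (Suc n))" for t n
  proof
    assume "?hit t"
    then obtain k where "t = s k" using range \<open>0 < t\<close> by blast
    then show False using that(2) strict_mono_less[OF s] by auto
  qed
  show ?thesis
  proof (induction n)
    case 0
    show ?case using step[of 0 "s 0"] hit[of 0] no_hit by simp
  next
    case (Suc n)
    have "s n < s (Suc n)" using s by (simp add: strict_mono_Suc_iff)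
    moreover have "\<not> ?hit t" if "s n < t" "t < s (Suc n)" for t
      using no_hit[of t n] hit(1)[of n] that by simp
    ultimately show ?case using step[of "s n" "s (Suc n)"] hit(2)[of "Suc n"] Suc by simp
  qed
qed

lemma cutting_sequence_mechanical:
  fixes y0 z0 \<alpha> \<beta> :: real and s :: "nat \<Rightarrow> real"
  assumes "\<alpha> \<noteq> 0" "\<beta> \<noteq> 0"
    and simple: "\<And>t. \<not> (y0 + t * \<alpha> \<in> \<int> \<and> z0 + t * \<beta> \<in> \<int>)"
    and s: "strict_mono s" and range: "range s = {t. 0 < t \<and> (y0 + t * \<alpha> \<in> \<int> \<or> z0 + t * \<beta> \<in> \<int>)}"
  obtains \<rho> where "\<And>n. z0 + s n * \<beta> \<in> \<int> \<longleftrightarrow> mechanical_word (\<bar>\<beta>\<bar> / (\<bar>\<alpha>\<bar> + \<bar>\<beta>\<bar>)) \<rho> n = C"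
proof -
  obtain y1 z1 where y1: "\<And>t. y0 + t * \<alpha> \<in> \<int> \<longleftrightarrow> y1 + t * \<bar>\<alpha>\<bar> \<in> \<int>"
    and z1: "\<And>t. z0 + t * \<beta> \<in> \<int> \<longleftrightarrow> z1 + t * \<bar>\<beta>\<bar> \<in> \<int>"
    using Ints_line_abs_slope by metis
  define g where "g = \<bar>\<beta>\<bar> / (\<bar>\<alpha>\<bar> + \<bar>\<beta>\<bar>)"
  define \<rho> where "\<rho> = g * of_int (\<lfloor>y1\<rfloor> + \<lfloor>z1\<rfloor> + 1) + (z1 - g * (y1 + z1))"
  have g: "0 < g" "g < 1" "g * (\<bar>\<alpha>\<bar> + \<bar>\<beta>\<bar>) = \<bar>\<beta>\<bar>"
    using assms(1,2) by (simp_all add: g_def field_simps)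
  have "z0 + s n * \<beta> \<in> \<int> \<longleftrightarrow> mechanical_word g \<rho> n = C" for n
  proof -
    define Y where "Y = y1 + s n * \<bar>\<alpha>\<bar>"
    define Z where "Z = z1 + s n * \<bar>\<beta>\<bar>"
    have "Z - g * (Y + Z) = z1 - g * (y1 + z1) + s n * (\<bar>\<beta>\<bar> - g * (\<bar>\<alpha>\<bar> + \<bar>\<beta>\<bar>))"
      unfolding Y_def Z_def by (simp add: algebra_simps)
    moreover have "\<lfloor>Y\<rfloor> + \<lfloor>Z\<rfloor> = \<lfloor>y1\<rfloor> + \<lfloor>z1\<rfloor> + int n + 1"
      unfolding Y_def Z_def using assms(1,2) simple s range
      by (intro crossing_count) (simp_all add: y1 z1)
    ultimately have "g * real n + \<rho> = g * of_int (\<lfloor>Y\<rfloor> + \<lfloor>Z\<rfloor>) + (Z - g * (Y + Z))"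
      unfolding \<rho>_def g(3) by (simp add: algebra_simps)
    moreover have "Y \<in> \<int> \<or> Z \<in> \<int>" "\<not> (Y \<in> \<int> \<and> Z \<in> \<int>)"
      using range simple unfolding Y_def Z_def y1 z1 by blast+
    ultimately show ?thesis
      using mechanical_letter_crossing[OF g(1,2)] unfolding mechanical_word_def Z_def z1 by simp
  qed
  then show thesis using that g_def by blast
qed

lemma Q_lin_indep2_imp_nonzero:
  assumes "Q_lin_indep2 x y"
  shows "x \<noteq> 0" and "y \<noteq> 0"
  using assms[unfolded Q_lin_indep2_def, rule_format, of 1 0]
    assms[unfolded Q_lin_indep2_def, rule_format, of 0 1] by auto

lemma Q_lin_indep2_iff_ratio:
  fixes \<alpha> \<beta> :: real
  assumes "\<beta> \<noteq> 0"
  shows "Q_lin_indep2 \<alpha> \<beta> \<longleftrightarrow> \<alpha> / \<beta> \<notin> \<rat>"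
proof
  assume indep: "Q_lin_indep2 \<alpha> \<beta>"
  show "\<alpha> / \<beta> \<notin> \<rat>"
  proof
    assume "\<alpha> / \<beta> \<in> \<rat>"
    then obtain r where "\<alpha> / \<beta> = of_rat r" by (auto elim: Rats_cases)
    then have "of_rat 1 * \<alpha> + of_rat (- r) * \<beta> = 0"
      using assms by (simp add: of_rat_minus field_simps)
    then show False using indep unfolding Q_lin_indep2_def by fastforce
  qed
next
  assume irrational: "\<alpha> / \<beta> \<notin> \<rat>"
  show "Q_lin_indep2 \<alpha> \<beta>" unfolding Q_lin_indep2_def
  proof (intro allI impI)
    fix p q :: rat assume rel: "of_rat p * \<alpha> + of_rat q * \<beta> = 0"
    show "p = 0 \<and> q = 0"
    proof (cases "p = 0")
      case False
      then have "\<alpha> / \<beta> = of_rat (- q / p)"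
        using rel assms by (simp add: of_rat_minus of_rat_divide field_simps)
      then show ?thesis using irrational by simp
    qed (use rel assms in simp)
  qed
qed

lemma Q_lin_indep2_iff_irrational:
  fixes \<alpha> \<beta> :: real
  assumes "\<alpha> \<noteq> 0" "\<beta> \<noteq> 0"
  shows "Q_lin_indep2 \<alpha> \<beta> \<longleftrightarrow> \<bar>\<beta>\<bar> / (\<bar>\<alpha>\<bar> + \<bar>\<beta>\<bar>) \<notin> \<rat>"
proof -
  have "\<alpha> / \<beta> \<in> \<rat> \<longleftrightarrow> \<bar>\<alpha>\<bar> / \<bar>\<beta>\<bar> \<in> \<rat>"
  proof -
    have "\<bar>\<alpha>\<bar> / \<bar>\<beta>\<bar> = \<bar>\<alpha> / \<beta>\<bar>" by simp
    then consider "\<bar>\<alpha>\<bar> / \<bar>\<beta>\<bar> = \<alpha> / \<beta>" | "\<bar>\<alpha>\<bar> / \<bar>\<beta>\<bar> = - (\<alpha> / \<beta>)" by (metis abs_if)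
    then show ?thesis by cases (simp_all add: Rats_minus_iff)
  qed
  also have "\<dots> \<longleftrightarrow> 1 / (\<bar>\<alpha>\<bar> / \<bar>\<beta>\<bar> + 1) \<in> \<rat>"
  proof
    assume "1 / (\<bar>\<alpha>\<bar> / \<bar>\<beta>\<bar> + 1) \<in> \<rat>"
    then have "1 / (1 / (\<bar>\<alpha>\<bar> / \<bar>\<beta>\<bar> + 1)) - 1 \<in> \<rat>"
      by (rule Rats_diff[OF Rats_divide[OF Rats_1] Rats_1])
    then show "\<bar>\<alpha>\<bar> / \<bar>\<beta>\<bar> \<in> \<rat>" by simp
  qed simp
  also have "1 / (\<bar>\<alpha>\<bar> / \<bar>\<beta>\<bar> + 1) = \<bar>\<beta>\<bar> / (\<bar>\<alpha>\<bar> + \<bar>\<beta>\<bar>)"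
    using assms by (simp add: field_simps)
  finally show ?thesis using Q_lin_indep2_iff_ratio[OF assms(2)] by simp
qed

section \<open>Billiard words\<close>

lemma finite_UNIV_letter: "finite (UNIV :: letter set)"
proof (rule finite_subset)
  show "(UNIV :: letter set) \<subseteq> {A, B, C}" using letter.exhaust by blast
qed simp

lemma ex_coord_nonzero:
  assumes "\<theta> \<noteq> (0, 0, 0)"
  obtains i where "coord i \<theta> \<noteq> 0"
proof (cases \<theta>)
  case (fields a b c)
  then show thesis using assms that[of A] that[of B] that[of C] by auto
qed

lemma billiard_well_defined_zero_slope:
  assumes "\<theta> \<noteq> (0, 0, 0)" "billiard_well_defined \<theta> m" "coord i \<theta> = 0"
  shows "coord i m + t * coord i \<theta> \<notin> \<int>"
proof
  obtain j where j: "coord j \<theta> \<noteq> 0" using assms(1) by (rule ex_coord_nonzero)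
  define t' where "t' = - coord j m / coord j \<theta>"
  have "coord j m + t' * coord j \<theta> \<in> \<int>" using j by (simp add: t'_def)
  moreover assume "coord i m + t * coord i \<theta> \<in> \<int>"
  then have "coord i m + t' * coord i \<theta> \<in> \<int>" using assms(3) by simp
  moreover have "i \<noteq> j" using assms(3) j by auto
  ultimately show False using assms(2) unfolding billiard_well_defined_def by blast
qed

lemma ex_enumeration_crossing_times:
  assumes "\<theta> \<noteq> (0, 0, 0)" "billiard_well_defined \<theta> m"
  obtains s :: "nat \<Rightarrow> real" where "strict_mono s" "range s = crossing_times \<theta> m"
proof -
  let ?I = "{i. coord i \<theta> \<noteq> 0}"
  have "finite ?I" using finite_UNIV_letter by (rule finite_subset[OF subset_UNIV])
  moreover obtain j where "j \<in> ?I" using ex_coord_nonzero[OF assms(1)] by blast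
  ultimately obtain s :: "nat \<Rightarrow> real" where
    "strict_mono s" "range s = {t. 0 < t \<and> (\<exists>i \<in> ?I. coord i m + t * coord i \<theta> \<in> \<int>)}"
    by (rule ex_enumeration_line_crossings) simp
  moreover have "crossing_times \<theta> m = {t. 0 < t \<and> (\<exists>i \<in> ?I. coord i m + t * coord i \<theta> \<in> \<int>)}"
    unfolding crossing_times_def using billiard_well_defined_zero_slope[OF assms] by blast
  ultimately show thesis by (intro that) simp_all
qed

lemma billiard_word_eq_iff:
  assumes wd: "billiard_well_defined \<theta> m"
    and s: "strict_mono s" "range s = crossing_times \<theta> m"
  shows "billiard_word \<theta> m n = i \<longleftrightarrow> coord i m + s n * coord i \<theta> \<in> \<int>"
proof -
  let ?hits = "\<lambda>i. coord i m + s n * coord i \<theta> \<in> \<int>"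
  have "(\<exists>s'. strict_mono s' \<and> range s' = crossing_times \<theta> m \<and> coord i m + s' n * coord i \<theta> \<in> \<int>)
      \<longleftrightarrow> ?hits i" for i
  proof
    assume "\<exists>s'. strict_mono s' \<and> range s' = crossing_times \<theta> m \<and> coord i m + s' n * coord i \<theta> \<in> \<int>"
    then obtain s' where "strict_mono s'" "range s' = range s" "coord i m + s' n * coord i \<theta> \<in> \<int>"
      using s(2) by auto
    then show "?hits i" using strict_mono_range_eq_imp_eq[OF _ s(1)] by blast
  qed (use s in blast)
  then have word: "billiard_word \<theta> m n = (THE i. ?hits i)" unfolding billiard_word_def by simp
  have "s n \<in> crossing_times \<theta> m" using s(2) by blast
  then obtain j where j: "?hits j" unfolding crossing_times_def by blast
  moreover have unique: "?hits i \<Longrightarrow> i = j" for i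
    using j wd unfolding billiard_well_defined_def by blast
  ultimately have "billiard_word \<theta> m n = j" unfolding word by (rule the_equality)
  then show ?thesis using j unique by blast
qed

lemma billiard_word_avoids_zero_slope:
  assumes "\<theta> \<noteq> (0, 0, 0)" "billiard_well_defined \<theta> m" "coord i \<theta> = 0"
  shows "i \<notin> range (billiard_word \<theta> m)"
proof -
  obtain s :: "nat \<Rightarrow> real" where "strict_mono s" "range s = crossing_times \<theta> m"
    using ex_enumeration_crossing_times[OF assms(1,2)] by blast
  then show ?thesis
    using billiard_word_eq_iff[OF assms(2)] billiard_well_defined_zero_slope[OF assms] by blast
qed

lemma erase_A_billiard_word:
  fixes \<theta> m :: "real \<times> real \<times> real" and s :: "nat \<Rightarrow> real"
  assumes "\<theta> \<noteq> (0, 0, 0)" and wd: "billiard_well_defined \<theta> m" and s: "strict_mono s"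
    and range_s: "range s = {t. 0 < t \<and> (coord B m + t * coord B \<theta> \<in> \<int> \<or> coord C m + t * coord C \<theta> \<in> \<int>)}"
  shows "infinite {k. billiard_word \<theta> m k \<noteq> A}"
    and "erase_A (billiard_word \<theta> m) n = (if coord C m + s n * coord C \<theta> \<in> \<int> then C else B)"
proof -
  obtain s3 :: "nat \<Rightarrow> real" where s3: "strict_mono s3" "range s3 = crossing_times \<theta> m"
    using ex_enumeration_crossing_times[OF assms(1) wd] by blast
  let ?u = "billiard_word \<theta> m"
  let ?hits = "\<lambda>i t. coord i m + t * coord i \<theta> \<in> \<int>"
  define K where "K = {k. ?u k \<noteq> A}"
  have u: "?u k = i \<longleftrightarrow> ?hits i (s3 k)" for k i by (rule billiard_word_eq_iff[OF wd s3])
  have K: "k \<in> K \<longleftrightarrow> ?hits B (s3 k) \<or> ?hits C (s3 k)" for k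
    unfolding K_def using u[of k] by (cases "?u k") auto
  have image: "s3 ` K = range s"
  proof
    show "s3 ` K \<subseteq> range s"
      using K s3(2) unfolding range_s crossing_times_def by blast
    show "range s \<subseteq> s3 ` K"
    proof
      fix t assume "t \<in> range s"
      then have "t \<in> range s3" and "?hits B t \<or> ?hits C t"
        unfolding s3(2) range_s crossing_times_def by blast+
      then show "t \<in> s3 ` K" using K by blast
    qed
  qed
  have "infinite (range s)" using range_inj_infinite strict_mono_imp_inj_on[OF s] by blast
  then show inf: "infinite {k. ?u k \<noteq> A}" using image unfolding K_def by (metis finite_imageI)
  have "strict_mono (s3 \<circ> enumerate K)"
    using s3(1) strict_mono_enumerate[OF inf[folded K_def]] by (simp add: strict_mono_def)
  moreover have "range (s3 \<circ> enumerate K) = range s"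
    unfolding image_comp[symmetric] range_enumerate[OF inf[folded K_def]] by (rule image)
  ultimately have "s3 \<circ> enumerate K = s" by (rule strict_mono_range_eq_imp_eq[OF _ s])
  then have "s3 (enumerate K n) = s n" by (metis comp_apply)
  moreover have "enumerate K n \<in> K" using enumerate_in_set inf unfolding K_def by blast
  ultimately have "?u (enumerate K n) = C \<longleftrightarrow> ?hits C (s n)" "?u (enumerate K n) \<noteq> A"
    using u unfolding K_def by auto
  then have "?u (enumerate K n) = (if ?hits C (s n) then C else B)"
    by (cases "?u (enumerate K n)") auto
  then show "erase_A ?u n = (if ?hits C (s n) then C else B)"
    unfolding erase_A_def K_def[symmetric] .
qed

lemma erase_A_billiard_word_mechanical:
  assumes "\<theta> \<noteq> (0, 0, 0)" "billiard_well_defined \<theta> m" "coord B \<theta> \<noteq> 0" "coord C \<theta> \<noteq> 0"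
  obtains \<rho> where "infinite {k. billiard_word \<theta> m k \<noteq> A}"
    and "erase_A (billiard_word \<theta> m) = mechanical_word (\<bar>coord C \<theta>\<bar> / (\<bar>coord B \<theta>\<bar> + \<bar>coord C \<theta>\<bar>)) \<rho>"
proof -
  let ?hits = "\<lambda>i t. coord i m + t * coord i \<theta> \<in> \<int>"
  let ?g = "\<bar>coord C \<theta>\<bar> / (\<bar>coord B \<theta>\<bar> + \<bar>coord C \<theta>\<bar>)"
  obtain s :: "nat \<Rightarrow> real" where s: "strict_mono s"
    and "range s = {t. 0 < t \<and> (\<exists>i \<in> {B, C}. ?hits i t)}"
    by (rule ex_enumeration_line_crossings[where I = "{B, C}" and w = "\<lambda>i. coord i m"
          and c = "\<lambda>i. coord i \<theta>"]) (use assms(3,4) in auto)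
  then have range: "range s = {t. 0 < t \<and> (?hits B t \<or> ?hits C t)}" by simp
  have simple: "\<not> (?hits B t \<and> ?hits C t)" for t
    using assms(2) unfolding billiard_well_defined_def by blast
  obtain \<rho> where \<rho>: "\<And>n. ?hits C (s n) \<longleftrightarrow> mechanical_word ?g \<rho> n = C"
    using cutting_sequence_mechanical[OF assms(3,4) simple s range] by blast
  have "erase_A (billiard_word \<theta> m) n = mechanical_word ?g \<rho> n" for n
    using erase_A_billiard_word(2)[OF assms(1,2) s range, of n] \<rho>[of n]
    by (simp add: mechanical_word_def mechanical_letter_def)
  then show thesis using that erase_A_billiard_word(1)[OF assms(1,2) s range] by blast
qed

theorem corollary1:
  fixes \<theta> m :: "real \<times> real \<times> real"
  assumes "\<theta> \<noteq> (0, 0, 0)"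
    and "m \<in> cube_boundary"
    and "billiard_well_defined \<theta> m"
  shows "erase_A_sturmian (billiard_word \<theta> m) \<longleftrightarrow> Q_lin_indep2 (coord B \<theta>) (coord C \<theta>)"
proof (cases "coord B \<theta> = 0 \<or> coord C \<theta> = 0")
  case True
  then obtain i where "i \<in> {B, C}" "coord i \<theta> = 0" by blast
  then have "\<not> erase_A_sturmian (billiard_word \<theta> m)"
    using billiard_word_avoids_zero_slope[OF assms(1,3)] erase_A_sturmian_imp_letters by blast
  moreover have "\<not> Q_lin_indep2 (coord B \<theta>) (coord C \<theta>)"
    using True Q_lin_indep2_imp_nonzero by blast
  ultimately show ?thesis by blast
next
  case False
  then have nonzero: "coord B \<theta> \<noteq> 0" "coord C \<theta> \<noteq> 0" by simp_all
  let ?g = "\<bar>coord C \<theta>\<bar> / (\<bar>coord B \<theta>\<bar> + \<bar>coord C \<theta>\<bar>)"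
  obtain \<rho> where "infinite {k. billiard_word \<theta> m k \<noteq> A}"
    and word: "erase_A (billiard_word \<theta> m) = mechanical_word ?g \<rho>"
    by (rule erase_A_billiard_word_mechanical[OF assms(1,3) nonzero])
  moreover have "0 < ?g" "?g < 1" using nonzero by (simp_all add: field_simps)
  ultimately show ?thesis
    unfolding erase_A_sturmian_def word
    by (simp add: sturmian_mechanical_word_iff Q_lin_indep2_iff_irrational[OF nonzero])
qed

end
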